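(* Let $G=(V,E)$ be a finite graph, $q\in\mathbb N$, $\beta\ge0$, and let $P_G$ be the transition matrix of the Swendsen--Wang dynamics for the $q$-state Potts model on $G$ at inverse temperature $\beta$. Let $\sigma,\tau\in\{1,\dots,q\}^V$, $v\in V$ and $k,l\in\{1,\dots,q\}$. Then \[ P_G(\sigma^{v,k},\tau^{v,l})\;\le\;a_3^{\deg_G(v)}\,P_G(\sigma,\tau),\qquad a_3=a_3(\beta,q)=q\,e^{2\beta}-(q-1)e^{\beta}. \]
   Context: Graphs are finite, parallel edges and loops allowed; $\deg_G(v)$ is the number of edges having $v$ as an endvertex. For $\sigma\in\{1,\dots,q\}^V$, $v\in V$, $k\in\{1,\dots,q\}$, $\sigma^{v,k}$ is the configuration equal to $\sigma$ off $v$ and equal to $k$ at $v$. For $A\subseteq E$, $c(A)$ is the number of connected components of $(V,A)$; $E(\sigma)$ is the set of edges whose endvertices have the same color in $\sigma$. With $p=1-e^{-\beta}$, $P_G(\sigma,\tau)=(1-p)^{|E(\sigma)|}\sum_{A\subseteq E(\sigma)\cap E(\tau)}\bigl(\tfrac{p}{1-p}\bigr)^{|A|}q^{-c(A)}$. *)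

theory Defs
  imports Complex_Main
begin

text \<open>A finite multigraph (parallel edges and loops allowed): a finite vertex set V,
a finite set of edge identifiers E, and an endpoint map assigning each edge its
(unordered) pair of endvertices, given as an ordered pair.\<close>

definition multigraph :: "'v set \<Rightarrow> 'e set \<Rightarrow> ('e \<Rightarrow> 'v \<times> 'v) \<Rightarrow> bool" where
  "multigraph V E ends \<longleftrightarrow> finite V \<and> finite E \<and>
     (\<forall>e\<in>E. fst (ends e) \<in> V \<and> snd (ends e) \<in> V)"

definition deg :: "'e set \<Rightarrow> ('e \<Rightarrow> 'v \<times> 'v) \<Rightarrow> 'v \<Rightarrow> nat" where
  "deg E ends v = card {e\<in>E. fst (ends e) = v \<or> snd (ends e) = v}"

definition conn_rel :: "'v set \<Rightarrow> ('e \<Rightarrow> 'v \<times> 'v) \<Rightarrow> 'e set \<Rightarrow> ('v \<times> 'v) set" where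
  "conn_rel V ends A =
     ({(x,y). \<exists>e\<in>A. ends e = (x,y) \<or> ends e = (y,x)}\<^sup>*) \<inter> (V \<times> V)"

definition ncomp :: "'v set \<Rightarrow> ('e \<Rightarrow> 'v \<times> 'v) \<Rightarrow> 'e set \<Rightarrow> nat" where
  "ncomp V ends A = card (V // conn_rel V ends A)"

definition mono_edges :: "'e set \<Rightarrow> ('e \<Rightarrow> 'v \<times> 'v) \<Rightarrow> ('v \<Rightarrow> nat) \<Rightarrow> 'e set" where
  "mono_edges E ends \<sigma> = {e\<in>E. \<sigma> (fst (ends e)) = \<sigma> (snd (ends e))}"

definition SW :: "'v set \<Rightarrow> 'e set \<Rightarrow> ('e \<Rightarrow> 'v \<times> 'v) \<Rightarrow> nat \<Rightarrow> real
                  \<Rightarrow> ('v \<Rightarrow> nat) \<Rightarrow> ('v \<Rightarrow> nat) \<Rightarrow> real" where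
  "SW V E ends q \<beta> \<sigma> \<tau> =
     (let p = 1 - exp (- \<beta>) in
      (1 - p) ^ card (mono_edges E ends \<sigma>) *
      (\<Sum>A\<in>Pow (mono_edges E ends \<sigma> \<inter> mono_edges E ends \<tau>).
          (p / (1 - p)) ^ card A * (1 / real q) ^ ncomp V ends A))"

definition config :: "'v set \<Rightarrow> nat \<Rightarrow> ('v \<Rightarrow> nat) \<Rightarrow> bool" where
  "config V q \<sigma> \<longleftrightarrow> (\<forall>v\<in>V. \<sigma> v \<in> {1..q})"

end

theory Submission
  imports Defs
begin

text \<open>With \<open>w = exp \<beta> - 1\<close> the transition weight factors as
  \<open>P(\<sigma>, \<tau>) = exp (-\<beta> |E(\<sigma>)|) Z(E(\<sigma>) \<inter> E(\<tau>))\<close>, where \<open>Z(F)\<close> sums \<open>w^|A| q^-c(A)\<close>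
  over \<open>A \<subseteq> F\<close>. Adding an edge to \<open>A\<close> merges at most two components, so adding an edge to
  \<open>F\<close> multiplies \<open>Z\<close> by at most \<open>1 + q w\<close>. Recolouring \<open>v\<close> only affects the \<open>deg v\<close> edges
  incident to \<open>v\<close>: it enlarges \<open>E(\<sigma>) \<inter> E(\<tau>)\<close> by at most these edges and shrinks \<open>E(\<sigma>)\<close> by
  at most as many, costing a factor \<open>exp \<beta> (1 + q w) = q exp (2\<beta>) - (q - 1) exp \<beta>\<close> per edge.\<close>

lemma card_quotient_le_Suc_if_merge:
  assumes "finite V" and R: "equiv V R" and R': "equiv V R'" and "R \<subseteq> R'"
    and x: "x \<in> V" and merge: "R' \<subseteq> R \<union> (R `` {x, y}) \<times> (R `` {x, y})"
  shows "card (V // R) \<le> card (V // R') + 1"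
proof -
  have "inj_on (\<lambda>C. R' `` C) (V // R - {R `` {x}})"
  proof (rule inj_onI)
    fix C1 C2 assume C1: "C1 \<in> V // R - {R `` {x}}" and C2: "C2 \<in> V // R - {R `` {x}}"
      and eq: "R' `` C1 = R' `` C2"
    obtain a1 a2 where a: "a1 \<in> V" "a2 \<in> V" "C1 = R `` {a1}" "C2 = R `` {a2}"
      using C1 C2 by (auto elim!: quotientE)
    have "(a1, a2) \<in> R'"
      using eq a refines_equiv_class_eq2[OF \<open>R \<subseteq> R'\<close> R R'] eq_equiv_class_iff[OF R' a(1,2)]
      by simp
    moreover have "(x, a1) \<notin> R" "(x, a2) \<notin> R"
      using C1 C2 a equiv_class_eq[OF R] by auto
    ultimately have "(a1, a2) \<in> R \<or> (y, a1) \<in> R \<and> (y, a2) \<in> R"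
      using merge by blast
    then have "(a1, a2) \<in> R"
      using equiv_class_eq_iff[OF R] by blast
    then show "C1 = C2" using a eq_equiv_class_iff[OF R a(1,2)] by simp
  qed
  moreover have "(\<lambda>C. R' `` C) ` (V // R - {R `` {x}}) \<subseteq> V // R'"
    using refines_equiv_image_eq[OF \<open>R \<subseteq> R'\<close> R R'] by blast
  moreover have "finite (V // R')"
    using \<open>finite V\<close> R' by (simp add: finite_quotient equiv_def)
  ultimately have "card (V // R - {R `` {x}}) \<le> card (V // R')"
    by (intro card_inj_on_le)
  then show ?thesis
    by (simp add: card_Diff_singleton_if split: if_splits)
qed

definition adjacency :: "('e \<Rightarrow> 'v \<times> 'v) \<Rightarrow> 'e set \<Rightarrow> ('v \<times> 'v) set" where
  "adjacency ends A = {(x, y). \<exists>e\<in>A. ends e = (x, y) \<or> ends e = (y, x)}"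

lemma conn_rel_eq_adjacency: "conn_rel V ends A = (adjacency ends A)\<^sup>* \<inter> V \<times> V"
  unfolding conn_rel_def adjacency_def by simp

lemma equiv_conn_rel: "equiv V (conn_rel V ends A)"
proof -
  have "sym ((adjacency ends A)\<^sup>*)"
    by (rule sym_rtrancl) (auto simp: adjacency_def sym_def)
  then show ?thesis
    unfolding conn_rel_eq_adjacency equiv_def refl_on_def sym_def trans_def
    by (auto intro: rtrancl_trans)
qed

lemma adjacency_insert:
  "ends e = (x, y) \<Longrightarrow> adjacency ends (insert e A) = adjacency ends A \<union> {(x, y), (y, x)}"
  unfolding adjacency_def by auto

lemma rtrancl_Un_edge_pair:
  assumes "(a, b) \<in> (S \<union> {(x, y), (y, x)})\<^sup>*"
  shows "(a, b) \<in> S\<^sup>* \<or> (a, x) \<in> S\<^sup>* \<and> (y, b) \<in> S\<^sup>* \<or> (a, y) \<in> S\<^sup>* \<and> (x, b) \<in> S\<^sup>*"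
  using assms by (induction rule: rtrancl_induct) (auto intro: rtrancl_into_rtrancl)

lemma ncomp_le_ncomp_insert_Suc:
  assumes "finite V" and ends: "ends e \<in> V \<times> V"
  shows "ncomp V ends A \<le> ncomp V ends (insert e A) + 1"
proof -
  obtain x y where xy: "ends e = (x, y)" "x \<in> V" "y \<in> V" using ends by auto
  define R where "R = conn_rel V ends A"
  define R' where "R' = conn_rel V ends (insert e A)"
  have R'_eq: "R' = (adjacency ends A \<union> {(x, y), (y, x)})\<^sup>* \<inter> V \<times> V"
    unfolding R'_def conn_rel_eq_adjacency using xy(1) by (simp add: adjacency_insert)
  have "R \<subseteq> R'"
    unfolding R_def R'_eq conn_rel_eq_adjacency by (auto intro: rtrancl_mono[THEN subsetD])
  moreover have "R' \<subseteq> R \<union> (R `` {x, y}) \<times> (R `` {x, y})"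
  proof (clarify)
    fix a b assume ab: "(a, b) \<in> R'" "(a, b) \<notin> R"
    then have "a \<in> V" "b \<in> V" "(a, x) \<in> R \<and> (y, b) \<in> R \<or> (a, y) \<in> R \<and> (x, b) \<in> R"
      using rtrancl_Un_edge_pair[of a b "adjacency ends A" x y] xy(2,3)
      unfolding R_def R'_eq conn_rel_eq_adjacency by auto
    moreover have "sym R" using equiv_conn_rel unfolding R_def equiv_def by blast
    ultimately show "a \<in> R `` {x, y} \<and> b \<in> R `` {x, y}"
      by (auto dest: symD)
  qed
  ultimately show ?thesis
    using card_quotient_le_Suc_if_merge[OF \<open>finite V\<close>] equiv_conn_rel xy(2)
    unfolding ncomp_def R_def R'_def by blast
qed

definition cluster_sum :: "'v set \<Rightarrow> ('e \<Rightarrow> 'v \<times> 'v) \<Rightarrow> real \<Rightarrow> real \<Rightarrow> 'e set \<Rightarrow> real" where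
  "cluster_sum V ends q w F = (\<Sum>A\<in>Pow F. w ^ card A * (1 / q) ^ ncomp V ends A)"

lemma SW_eq_cluster_sum:
  "SW V E ends q \<beta> \<sigma> \<tau> = exp (- \<beta>) ^ card (mono_edges E ends \<sigma>) *
     cluster_sum V ends (real q) (exp \<beta> - 1) (mono_edges E ends \<sigma> \<inter> mono_edges E ends \<tau>)"
proof -
  have "(1 - exp (- \<beta>)) / (1 - (1 - exp (- \<beta>))) = exp \<beta> - 1"
    by (simp add: exp_minus field_simps)
  then show ?thesis unfolding SW_def cluster_sum_def Let_def by simp
qed

lemma cluster_sum_nonneg: "0 < q \<Longrightarrow> 0 \<le> w \<Longrightarrow> 0 \<le> cluster_sum V ends q w F"
  unfolding cluster_sum_def by (intro sum_nonneg) auto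

lemma cluster_sum_mono:
  "finite G \<Longrightarrow> F \<subseteq> G \<Longrightarrow> 0 < q \<Longrightarrow> 0 \<le> w \<Longrightarrow> cluster_sum V ends q w F \<le> cluster_sum V ends q w G"
  unfolding cluster_sum_def by (intro sum_mono2) auto

lemma power_one_over_le_if_le_Suc:
  fixes q :: real
  assumes "1 \<le> q" and "c \<le> c' + 1"
  shows "(1 / q) ^ c' \<le> q * (1 / q) ^ c"
proof (cases c)
  case 0
  then show ?thesis using assms power_le_one[of "1 / q" c'] by simp
next
  case (Suc m)
  then show ?thesis using assms power_decreasing[of m c' "1 / q"] by simp
qed

lemma cluster_sum_insert_le:
  assumes "finite V" "finite F" "ends e \<in> V \<times> V" "e \<notin> F" "0 \<le> w" "1 \<le> q"
  shows "cluster_sum V ends q w (insert e F) \<le> (1 + q * w) * cluster_sum V ends q w F"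
proof -
  define t where "t A = w ^ card A * (1 / q) ^ ncomp V ends A" for A
  have step: "t (insert e A) \<le> q * w * t A" if "A \<in> Pow F" for A
  proof -
    have A: "finite A" "e \<notin> A" using that assms(2,4) finite_subset by auto
    have "(1 / q) ^ ncomp V ends (insert e A) \<le> q * (1 / q) ^ ncomp V ends A"
      using power_one_over_le_if_le_Suc[OF assms(6)]
        ncomp_le_ncomp_insert_Suc[where ends = ends and e = e, OF assms(1,3)] by blast
    then have "w * w ^ card A * (1 / q) ^ ncomp V ends (insert e A)
        \<le> w * w ^ card A * (q * (1 / q) ^ ncomp V ends A)"
      using assms(5) by (intro mult_left_mono) auto
    then show ?thesis
      unfolding t_def using A by (simp add: algebra_simps)
  qed
  have "inj_on (insert e) (Pow F)"
    using assms(4) by (intro inj_onI) (auto simp: insert_ident)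
  then have "cluster_sum V ends q w (insert e F) = sum t (Pow F) + (\<Sum>A\<in>Pow F. t (insert e A))"
    unfolding cluster_sum_def t_def[symmetric] Pow_insert
    using assms(2,4) by (subst sum.union_disjoint) (auto simp: sum.reindex)
  also have "\<dots> \<le> sum t (Pow F) + q * w * sum t (Pow F)"
    unfolding sum_distrib_left using step by (intro add_left_mono sum_mono) auto
  finally show ?thesis unfolding cluster_sum_def t_def by (simp add: algebra_simps)
qed

lemma cluster_sum_Un_le:
  assumes "finite V" "finite F" "finite D" "\<forall>e\<in>D. ends e \<in> V \<times> V" "0 \<le> w" "1 \<le> q"
  shows "cluster_sum V ends q w (F \<union> D) \<le> (1 + q * w) ^ card D * cluster_sum V ends q w F"
  using assms(3,4)
proof (induction D rule: finite_induct)
  case empty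
  then show ?case by simp
next
  case (insert d D)
  let ?Z = "cluster_sum V ends q w"
  have IH: "?Z (F \<union> D) \<le> (1 + q * w) ^ card D * ?Z F" using insert by simp
  have "?Z (F \<union> insert d D) \<le> (1 + q * w) * ?Z (F \<union> D)"
  proof (cases "d \<in> F \<union> D")
    case True
    have "0 \<le> q * w * ?Z (F \<union> D)"
      using assms(5,6) by (intro mult_nonneg_nonneg cluster_sum_nonneg) auto
    then show ?thesis
      using True by (simp add: insert_absorb algebra_simps)
  next
    case False
    then show ?thesis
      using cluster_sum_insert_le[of V "F \<union> D" ends d w q] assms insert by simp
  qed
  also have "\<dots> \<le> (1 + q * w) * ((1 + q * w) ^ card D * ?Z F)"
    using IH assms(5,6) by (intro mult_left_mono) auto
  finally show ?case using insert by simp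
qed

definition incident :: "'e set \<Rightarrow> ('e \<Rightarrow> 'v \<times> 'v) \<Rightarrow> 'v \<Rightarrow> 'e set" where
  "incident E ends v = {e\<in>E. fst (ends e) = v \<or> snd (ends e) = v}"

lemma deg_eq_card_incident: "deg E ends v = card (incident E ends v)"
  unfolding deg_def incident_def ..

lemma mono_edges_fun_upd_subset:
  "mono_edges E ends (\<sigma>(v := k)) \<subseteq> mono_edges E ends \<sigma> \<union> incident E ends v"
  unfolding mono_edges_def incident_def by auto

lemma power_le_inverse_power_mult:
  fixes x :: real
  assumes "0 < x" "x \<le> 1" "m \<le> m' + d"
  shows "x ^ m' \<le> (1 / x) ^ d * x ^ m"
proof -
  have "x ^ (m' + d) \<le> x ^ m" using assms by (intro power_decreasing) auto
  then show ?thesis using assms(1) by (simp add: power_add field_simps)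
qed

lemma card_mono_edges_le_fun_upd:
  assumes "finite E"
  shows "card (mono_edges E ends \<sigma>) \<le> card (mono_edges E ends (\<sigma>(v := k))) + deg E ends v"
proof -
  have "card (mono_edges E ends \<sigma>) \<le> card (mono_edges E ends (\<sigma>(v := k)) \<union> incident E ends v)"
    using assms mono_edges_fun_upd_subset[of E ends "\<sigma>(v := k)" v "\<sigma> v"]
    by (intro card_mono) (auto simp: mono_edges_def incident_def)
  also have "\<dots> \<le> card (mono_edges E ends (\<sigma>(v := k))) + deg E ends v"
    unfolding deg_eq_card_incident by (rule card_Un_le)
  finally show ?thesis .
qed

lemma exp_power_card_mono_edges_fun_upd_le:
  fixes \<beta> :: real
  assumes "finite E" "0 \<le> \<beta>"
  shows "exp (- \<beta>) ^ card (mono_edges E ends (\<sigma>(v := k)))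
    \<le> exp \<beta> ^ deg E ends v * exp (- \<beta>) ^ card (mono_edges E ends \<sigma>)"
proof -
  have "exp (- \<beta>) ^ card (mono_edges E ends (\<sigma>(v := k)))
      \<le> (1 / exp (- \<beta>)) ^ deg E ends v * exp (- \<beta>) ^ card (mono_edges E ends \<sigma>)"
    using assms card_mono_edges_le_fun_upd by (intro power_le_inverse_power_mult) auto
  then show ?thesis by (simp add: exp_minus inverse_eq_divide)
qed

lemma cluster_sum_mono_edges_fun_upd_le:
  assumes "multigraph V E ends" "0 \<le> w" "1 \<le> q"
  shows "cluster_sum V ends q w (mono_edges E ends (\<sigma>(v := k)) \<inter> mono_edges E ends (\<tau>(v := l)))
    \<le> (1 + q * w) ^ deg E ends v * cluster_sum V ends q w (mono_edges E ends \<sigma> \<inter> mono_edges E ends \<tau>)"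
proof -
  let ?Z = "cluster_sum V ends q w" and ?M = "mono_edges E ends" and ?D = "incident E ends v"
  have "finite V" "finite E" and ends: "\<forall>e\<in>E. ends e \<in> V \<times> V"
    using assms(1) unfolding multigraph_def by (auto simp: mem_Times_iff)
  have "?M (\<sigma>(v := k)) \<inter> ?M (\<tau>(v := l)) \<subseteq> (?M \<sigma> \<inter> ?M \<tau>) \<union> ?D"
    using mono_edges_fun_upd_subset[of E ends] by blast
  then have "?Z (?M (\<sigma>(v := k)) \<inter> ?M (\<tau>(v := l))) \<le> ?Z ((?M \<sigma> \<inter> ?M \<tau>) \<union> ?D)"
    using \<open>finite E\<close> assms(2,3) by (intro cluster_sum_mono) (auto simp: mono_edges_def incident_def)
  also have "\<dots> \<le> (1 + q * w) ^ card ?D * ?Z (?M \<sigma> \<inter> ?M \<tau>)"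
    using \<open>finite V\<close> \<open>finite E\<close> ends assms(2,3)
    by (intro cluster_sum_Un_le) (auto simp: mono_edges_def incident_def)
  finally show ?thesis unfolding deg_eq_card_incident .
qed

text \<open>Only \<open>k \<in> {1..q}\<close> is used (to get \<open>q \<ge> 1\<close>): the bound holds for arbitrary colourings.\<close>

theorem lemma3p8:
  fixes V :: "'v set" and E :: "'e set" and ends :: "'e \<Rightarrow> 'v \<times> 'v"
    and q :: nat and \<beta> :: real and \<sigma> \<tau> :: "'v \<Rightarrow> nat" and v :: 'v and k l :: nat
  assumes "multigraph V E ends"
    and "\<beta> \<ge> 0"
    and "config V q \<sigma>" and "config V q \<tau>"
    and "v \<in> V" and "k \<in> {1..q}" and "l \<in> {1..q}"
  shows "SW V E ends q \<beta> (\<sigma>(v := k)) (\<tau>(v := l))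
         \<le> (real q * exp (2 * \<beta>) - (real q - 1) * exp \<beta>) ^ deg E ends v
            * SW V E ends q \<beta> \<sigma> \<tau>"
proof -
  let ?Z = "cluster_sum V ends (real q) (exp \<beta> - 1)" and ?M = "mono_edges E ends"
  have q: "1 \<le> real q" and w: "0 \<le> exp \<beta> - 1" using assms(2,6) by auto
  have "finite E" using assms(1) unfolding multigraph_def by simp
  have "SW V E ends q \<beta> (\<sigma>(v := k)) (\<tau>(v := l))
      = exp (- \<beta>) ^ card (?M (\<sigma>(v := k))) * ?Z (?M (\<sigma>(v := k)) \<inter> ?M (\<tau>(v := l)))"
    by (rule SW_eq_cluster_sum)
  also have "\<dots> \<le> (exp \<beta> ^ deg E ends v * exp (- \<beta>) ^ card (?M \<sigma>))
      * ((1 + real q * (exp \<beta> - 1)) ^ deg E ends v * ?Z (?M \<sigma> \<inter> ?M \<tau>))"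
    using \<open>finite E\<close> assms(1,2) q w
    by (intro mult_mono exp_power_card_mono_edges_fun_upd_le cluster_sum_mono_edges_fun_upd_le
        cluster_sum_nonneg) auto
  also have "\<dots> = (exp \<beta> * (1 + real q * (exp \<beta> - 1))) ^ deg E ends v
      * (exp (- \<beta>) ^ card (?M \<sigma>) * ?Z (?M \<sigma> \<inter> ?M \<tau>))"
    by (simp add: power_mult_distrib mult_ac)
  also have "exp \<beta> * (1 + real q * (exp \<beta> - 1)) = real q * exp (2 * \<beta>) - (real q - 1) * exp \<beta>"
    by (simp add: algebra_simps mult_exp_exp)
  also have "exp (- \<beta>) ^ card (?M \<sigma>) * ?Z (?M \<sigma> \<inter> ?M \<tau>) = SW V E ends q \<beta> \<sigma> \<tau>"
    by (rule SW_eq_cluster_sum[symmetric])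
  finally show ?thesis .
qed

end
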